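(* Let $\lambda\in\mathbb{C}$ and let $u,v:\mathbb{Z}^2\to\mathbb{C}$ satisfy, for all $(l,m)\in\mathbb{Z}^2$ (with all denominators nonzero), \[ \widetilde{\overline u}-u-\frac1{\widetilde u}+\frac1{\overline u}=0,\qquad u-\widetilde{\overline v}-\frac1{\overline u}+\frac{\lambda}{\widetilde v}=0, \] \[ (u-v)\Big(\frac1u+\widetilde v\Big)-1+\lambda=0,\qquad \frac1u-\frac{\lambda}{v}-\overline u+\overline v=0. \] Then $v$ satisfies, for all $(l,m)\in\mathbb{Z}^2$, \[ \big(v\,\overline v-\widetilde v\,\widetilde{\overline v}\big)^2+\big(v-\widetilde{\overline v}\big)\big(\overline v-\widetilde v\big)\big(\lambda-v\,\overline v\big)\big(\lambda-\widetilde v\,\widetilde{\overline v}\big)=0. \]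
   Context: Shift notation: for $f:\mathbb{Z}^2\to\mathbb{C}$, $f=f_{l,m}$, $\overline f=f_{l+1,m}$, $\widetilde f=f_{l,m+1}$, $\widetilde{\overline f}=f_{l+1,m+1}$. *)

theory Defs
  imports Complex_Main
begin

end

theory Submission
  imports Defs
begin

text \<open>Fix a quad of the lattice and write \<open>a, b, c, d\<close> for \<open>v, v\<^sub>1, v\<^sub>2, v\<^sub>1\<^sub>2\<close> and
  \<open>x, y\<close> for \<open>u, u\<^sub>1\<close>. After clearing denominators, the third equation on the two lower
  edges gives quadratics for \<open>x\<close> and \<open>y\<close>, while the fourth and second equations are
  bilinear in \<open>x, y\<close>. Eliminating \<open>y\<close> between these four relations determines \<open>x\<close>
  rationally in \<open>a, b, c, d\<close>; substituting into the quadratic for \<open>x\<close> yields the quad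
  equation for \<open>v\<close>, up to the nonzero factor \<open>-a c\<^sup>2\<close>.\<close>

lemma quadratic_of_edge_equation:
  fixes x a c L :: "'a::field"
  assumes "x \<noteq> 0" and "(x - a) * (1/x + c) - 1 + L = 0"
  shows "c*x^2 + (L - a*c)*x - a = 0"
proof -
  have "c*x^2 + (L - a*c)*x - a = x * ((x - a) * (1/x + c) - 1 + L)"
    using \<open>x \<noteq> 0\<close> by (simp add: field_simps power2_eq_square)
  with assms(2) show ?thesis by simp
qed

lemma bilinear_of_horizontal_equation:
  fixes x y a b L :: "'a::field"
  assumes "x \<noteq> 0" and "a \<noteq> 0" and "1/x - L/a - y + b = 0"
  shows "a*x*y - a*b*x - a + L*x = 0"
proof -
  have "a*x*y - a*b*x - a + L*x = - (a*x*(1/x - L/a - y + b))"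
    using assms(1,2) by (simp add: field_simps)
  with assms(3) show ?thesis by simp
qed

lemma bilinear_of_diagonal_equation:
  fixes x y c d L :: "'a::field"
  assumes "y \<noteq> 0" and "c \<noteq> 0" and "x - d - 1/y + L/c = 0"
  shows "c*x*y - c*d*y - c + L*y = 0"
proof -
  have "c*x*y - c*d*y - c + L*y = c*y*(x - d - 1/y + L/c)"
    using assms(1,2) by (simp add: field_simps)
  with assms(3) show ?thesis by simp
qed

lemma eliminate_second_vertex:
  fixes a b c d x y L :: "'a::field"
  assumes "x \<noteq> 0" and "y \<noteq> 0"
    and quad_x: "c*x^2 + (L - a*c)*x - a = 0"
    and quad_y: "d*y^2 + (L - b*d)*y - b = 0"
    and bilin_a: "a*x*y - a*b*x - a + L*x = 0"
    and bilin_c: "c*x*y - c*d*y - c + L*y = 0"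
  shows "x * (c*(a*b - c*d)) = a*b*c*d - a*c*c*d + a*c*L - a*b*L"
proof -
  have "x*(a*y - a*b - c*x + a*c) = (a*x*y - a*b*x - a + L*x) - (c*x^2 + (L - a*c)*x - a)"
    by (simp add: algebra_simps power2_eq_square)
  with quad_x bilin_a \<open>x \<noteq> 0\<close> have "a*y - a*b - c*x + a*c = 0"
    by simp
  then have ay: "a*y = a*b - a*c + c*x"
    by (simp add: algebra_simps)
  have "y*(b*c*x + b*L - c*d*y - c*L) = b*(c*x*y - c*d*y - c + L*y) - c*(d*y^2 + (L - b*d)*y - b)"
    by (simp add: algebra_simps power2_eq_square)
  with quad_y bilin_c \<open>y \<noteq> 0\<close> have "b*c*x + b*L - c*d*y - c*L = 0"
    by simp
  then have "b*c*x + b*L = c*d*y + c*L"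
    by (simp add: algebra_simps)
  then have "a*(b*c*x + b*L) = c*d*(a*y) + a*c*L"
    by (simp add: algebra_simps)
  also have "\<dots> = c*d*(a*b - a*c + c*x) + a*c*L"
    by (simp only: ay)
  finally show ?thesis
    by (simp add: algebra_simps)
qed

lemma quad_equation_from_edge_relations:
  fixes a b c d x y L :: "'a::field"
  assumes "x \<noteq> 0" and "y \<noteq> 0" and "a \<noteq> 0" and "c \<noteq> 0"
    and quad_x: "c*x^2 + (L - a*c)*x - a = 0"
    and quad_y: "d*y^2 + (L - b*d)*y - b = 0"
    and bilin_a: "a*x*y - a*b*x - a + L*x = 0"
    and bilin_c: "c*x*y - c*d*y - c + L*y = 0"
  shows "(a*b - c*d)^2 + (a - d)*(b - c)*(L - a*b)*(L - c*d) = 0"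
proof -
  define N where "N = a*b*c*d - a*c*c*d + a*c*L - a*b*L"
  define D where "D = c*(a*b - c*d)"
  have xD: "x*D = N"
    unfolding N_def D_def by (rule eliminate_second_vertex[OF assms(1,2) quad_x quad_y bilin_a bilin_c])
  have "c*N^2 + (L - a*c)*N*D - a*D^2 = D^2*(c*x^2 + (L - a*c)*x - a)"
    unfolding xD[symmetric] by (simp add: algebra_simps power2_eq_square)
  also have "\<dots> = 0"
    using quad_x by simp
  finally have "c*N^2 + (L - a*c)*N*D - a*D^2 = 0" .
  moreover have "c*N^2 + (L - a*c)*N*D - a*D^2
      = - (a*c^2) * ((a*b - c*d)^2 + (a - d)*(b - c)*(L - a*b)*(L - c*d))"
    unfolding N_def D_def by (simp add: algebra_simps power2_eq_square)
  ultimately show ?thesis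
    using \<open>a \<noteq> 0\<close> \<open>c \<noteq> 0\<close> by simp
qed

theorem mainTheorem4:
  fixes u v :: "int \<Rightarrow> int \<Rightarrow> complex" and lam :: complex
  assumes u_nz: "\<And>l m. u l m \<noteq> 0"
    and v_nz: "\<And>l m. v l m \<noteq> 0"
    and e1: "\<And>l m. u (l+1) (m+1) - u l m - 1 / u l (m+1) + 1 / u (l+1) m = 0"
    and e2: "\<And>l m. u l m - v (l+1) (m+1) - 1 / u (l+1) m + lam / v l (m+1) = 0"
    and e3: "\<And>l m. (u l m - v l m) * (1 / u l m + v l (m+1)) - 1 + lam = 0"
    and e4: "\<And>l m. 1 / u l m - lam / v l m - u (l+1) m + v (l+1) m = 0"
  shows "\<And>l m. (v l m * v (l+1) m - v l (m+1) * v (l+1) (m+1))\<^sup>2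
      + (v l m - v (l+1) (m+1)) * (v (l+1) m - v l (m+1))
        * (lam - v l m * v (l+1) m) * (lam - v l (m+1) * v (l+1) (m+1)) = 0"
proof -
  fix l m
  show "?thesis l m"
  proof (rule quad_equation_from_edge_relations)
    show "v l (m+1) * (u l m)^2 + (lam - v l m * v l (m+1)) * u l m - v l m = 0"
      by (rule quadratic_of_edge_equation[OF u_nz e3])
    show "v (l+1) (m+1) * (u (l+1) m)^2 + (lam - v (l+1) m * v (l+1) (m+1)) * u (l+1) m
        - v (l+1) m = 0"
      by (rule quadratic_of_edge_equation[OF u_nz e3])
    show "v l m * u l m * u (l+1) m - v l m * v (l+1) m * u l m - v l m + lam * u l m = 0"
      by (rule bilinear_of_horizontal_equation[OF u_nz v_nz e4])
    show "v l (m+1) * u l m * u (l+1) m - v l (m+1) * v (l+1) (m+1) * u (l+1) m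
        - v l (m+1) + lam * u (l+1) m = 0"
      by (rule bilinear_of_diagonal_equation[OF u_nz v_nz e2])
  qed (use u_nz v_nz in auto)
qed

end
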